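(* Consider the IMAB model with $K=2$ arms, $\mathcal{X}_1=\mathcal{X}_2=\{0,1\}$, Bernoulli parameters $p_i=p_i(1)\in[\frac25,\frac12]$ with $p_2<p_1<\frac12$, and let $\Delta=h_b(p_1)-h_b(p_2)$. Run the generic UCB algorithm with the plug-in estimator $\hat H(\boldsymbol Y,n)=h_b(\hat p(\boldsymbol Y,n))$, the upper confidence deviation $\mathrm{UCD}(\boldsymbol Y,\delta,n)=\mathrm{UCD}^{(1/2)}_{\mathrm{ber}}(\hat p(\boldsymbol Y,n),\delta,n)$, and $\delta_\alpha(t)=4t^{-\alpha}$ with $\alpha>2$. Then for every $t\ge 2$, \[ R(t)\leq \frac{784(\frac12-p_2)^2\alpha\log t}{\Delta}+60\alpha\log t+\frac{8(\alpha-1)}{\alpha-2}\Delta. \]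
   Context: IMAB model: there are $K\ge2$ arms; arm $i$ emits i.i.d. symbols from an unknown PMF $p_i$ on a finite alphabet $\mathcal{X}_i$, independently across rounds and arms. $H_i:=H(p_i)$ (natural log), $i^*\in\arg\max_i H_i$, $\Delta_i:=H_{i^*}-H_i$. Generic UCB algorithm: given an estimator $\hat H(\boldsymbol Y,n)$, an upper confidence deviation $\mathrm{UCD}(\boldsymbol Y,\delta,n)$ and a confidence function $\delta_\alpha(t)$, at each round $t=1,2,\ldots$ the player plays $I(t)\in\arg\max_{i\in[K]}\{\hat H(\boldsymbol X_i(t-1),N_i(t-1))+\mathrm{UCD}(\boldsymbol X_i(t-1),\delta_\alpha(t),N_i(t-1))\}$ (ties broken arbitrarily; an arm whose index is undefined, e.g. with $N_i(t-1)=0$, is treated as having index $+\infty$), where $\boldsymbol X_i(t-1)$ is the tuple of symbols observed from arm $i$ before round $t$ and $N_i(t-1)$ its length; it then observes a fresh symbol from $p_{I(t)}$, appended to $\boldsymbol X_{I(t)}$. $N_i(t)$ is the number of plays of arm $i$ in rounds $1,\ldots,t$. Pseudo-regret: $R(t):=\sum_{i:\Delta_i>0}\mathbb{E}[N_i(t)]\Delta_i$. $h_b(p):=-p\log p-(1-p)\log(1-p)$; $\hat p(\boldsymbol Y,n)$ is the empirical frequency of $1$ in $\boldsymbol Y$. $\mathrm{UCD}^{(1/2)}_{\mathrm{ber}}(q,\delta,n):=7|\frac12-q|\sqrt{\log(4/\delta)/n}+9\log(4/\delta)/n$. *)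

theory Defs
  imports "HOL-Probability.Probability"
begin

definition hb :: "real \<Rightarrow> real" where
  "hb p = - p * ln p - (1 - p) * ln (1 - p)"

text \<open>Empirical frequency of the symbol 1 (encoded as True) in an observation tuple.\<close>
definition phat :: "bool list \<Rightarrow> real" where
  "phat ys = real (length (filter id ys)) / real (length ys)"

definition UCD_ber :: "real \<Rightarrow> real \<Rightarrow> nat \<Rightarrow> real" where
  "UCD_ber q \<delta> n = 7 * \<bar>1/2 - q\<bar> * sqrt (ln (4 / \<delta>) / real n) + 9 * ln (4 / \<delta>) / real n"

definition delta_alpha :: "real \<Rightarrow> nat \<Rightarrow> real" where
  "delta_alpha \<alpha> t = 4 * real t powr (- \<alpha>)"

definition ucb_index :: "bool list \<Rightarrow> real \<Rightarrow> ereal" where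
  "ucb_index ys \<delta> =
     (if ys = [] then PInfty
      else ereal (hb (phat ys) + UCD_ber (phat ys) \<delta> (length ys)))"

text \<open>Arm i's k-th observation (k = 0,1,...) is X_i k (stack-of-rewards model).
  tb is an arbitrary tie-breaking rule, consulted only when the two indices are
  equal; it may depend on the round and the whole history; True means "play arm 1".\<close>
fun ucb_counts :: "real \<Rightarrow> (nat \<Rightarrow> bool list \<Rightarrow> bool list \<Rightarrow> bool)
                   \<Rightarrow> (nat \<Rightarrow> bool) \<Rightarrow> (nat \<Rightarrow> bool) \<Rightarrow> nat \<Rightarrow> nat \<times> nat" where
  "ucb_counts \<alpha> tb X1 X2 0 = (0, 0)"
| "ucb_counts \<alpha> tb X1 X2 (Suc t) =
     (let (n1, n2) = ucb_counts \<alpha> tb X1 X2 t;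
          o1 = map X1 [0..<n1];
          o2 = map X2 [0..<n2];
          \<delta> = delta_alpha \<alpha> (Suc t);
          i1 = ucb_index o1 \<delta>;
          i2 = ucb_index o2 \<delta>;
          play1 = (i1 > i2 \<or> (i1 = i2 \<and> tb (Suc t) o1 o2))
      in if play1 then (n1 + 1, n2) else (n1, n2 + 1))"

definition sample_pmf :: "real \<Rightarrow> real \<Rightarrow> nat \<Rightarrow> ((nat \<Rightarrow> bool) \<times> (nat \<Rightarrow> bool)) pmf" where
  "sample_pmf p1 p2 t =
     pair_pmf (Pi_pmf {..<t} False (\<lambda>_. bernoulli_pmf p1))
              (Pi_pmf {..<t} False (\<lambda>_. bernoulli_pmf p2))"

definition expected_plays :: "real \<Rightarrow> real \<Rightarrow> real \<Rightarrow> (nat \<Rightarrow> bool list \<Rightarrow> bool list \<Rightarrow> bool)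
                               \<Rightarrow> nat \<Rightarrow> nat \<Rightarrow> real" where
  "expected_plays p1 p2 \<alpha> tb i t =
     measure_pmf.expectation (sample_pmf p1 p2 t)
       (\<lambda>(X1, X2). real ((if i = 1 then fst else snd) (ucb_counts \<alpha> tb X1 X2 t)))"

definition pseudo_regret :: "real \<Rightarrow> real \<Rightarrow> real \<Rightarrow> (nat \<Rightarrow> bool list \<Rightarrow> bool list \<Rightarrow> bool)
                              \<Rightarrow> nat \<Rightarrow> real" where
  "pseudo_regret p1 p2 \<alpha> tb t =
     (let H = (\<lambda>i::nat. if i = 1 then hb p1 else hb p2);
          Hstar = max (hb p1) (hb p2)
      in \<Sum>i\<in>{i\<in>{1,2}. Hstar - H i > 0}. expected_plays p1 p2 \<alpha> tb i t * (Hstar - H i))"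

end

theory Submission
  imports Defs
begin

text \<open>Since hb p2 < hb p1, the regret is E[N_2(t)] (hb p1 - hb p2). With the confidence
  radius e(m, s) = sqrt (\<alpha> ln s / (2 m)), the UCD of a sample of size m in round s equals
  7 |1/2 - q| sqrt 2 e + 18 e^2. Concavity of hb, together with |ln ((1 - q) / q)| \<le> 7 |1/2 - q|
  near 1/2, shows: if arm 1's empirical mean is within e of p1, its index is at least hb p1;
  if arm 2's is within e of p2 and arm 2 has been sampled at least
  u \<approx> 578 (1/2 - p2)^2 \<alpha> ln t / \<Delta>^2 + 30 \<alpha> ln t / \<Delta> times, its index is below hb p1.
  So each play of arm 2 beyond the u-th is charged to a round s and a sample size m < s at
  which one of the two empirical means deviates. By Hoeffding each such event has
  probability at most 2 s^(-\<alpha>), and 4 \<Sum>_s (s - 1) s^(-\<alpha>) \<le> 4 / (\<alpha> - 2).\<close>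

section \<open>Binary entropy\<close>

lemma mult_ln_diff_le:
  fixes p q :: real
  assumes "0 \<le> q" "0 < p"
  shows "q * (ln p - ln q) \<le> p - q"
proof (cases "q = 0")
  case False
  then have "q > 0" using assms by simp
  have "q * (ln p - ln q) = q * ln (p/q)" using \<open>q > 0\<close> assms by (simp add: ln_div)
  also have "\<dots> \<le> q * (p/q - 1)"
    using \<open>q > 0\<close> assms by (intro mult_left_mono ln_le_minus_one) auto
  also have "\<dots> = p - q" using \<open>q > 0\<close> by (simp add: field_simps)
  finally show ?thesis .
qed (use assms in simp)

lemma hb_le_tangent:
  assumes "0 < p" "p < 1" "0 \<le> q" "q \<le> 1"
  shows "hb q \<le> hb p + ln ((1 - p) / p) * (q - p)"
proof -
  have "q * (ln p - ln q) \<le> p - q"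
    and "(1 - q) * (ln (1 - p) - ln (1 - q)) \<le> (1 - p) - (1 - q)"
    using assms by (intro mult_ln_diff_le; simp)+
  moreover have "ln ((1 - p) / p) = ln (1 - p) - ln p" using assms by (simp add: ln_div)
  ultimately show ?thesis unfolding hb_def by (simp only:) (simp add: algebra_simps)
qed

lemma hb_nonneg:
  assumes "0 \<le> q" "q \<le> 1"
  shows "0 \<le> hb q"
proof -
  have "q * ln q \<le> 0"
    using assms by (cases "q = 0") (auto intro!: mult_nonneg_nonpos)
  moreover have "(1 - q) * ln (1 - q) \<le> 0"
    using assms by (cases "q = 1") (auto intro!: mult_nonneg_nonpos)
  ultimately show ?thesis unfolding hb_def by simp
qed

lemma hb_le_ln2:
  assumes "0 \<le> q" "q \<le> 1"
  shows "hb q \<le> ln 2"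
proof -
  have "hb q \<le> hb (1/2) + ln ((1 - 1/2) / (1/2)) * (q - 1/2)"
    using assms by (intro hb_le_tangent) auto
  also have "\<dots> = ln 2" by (simp add: hb_def ln_div)
  finally show ?thesis .
qed

lemma hb_less:
  assumes "0 < p2" "p2 < p1" "p1 < 1/2"
  shows "hb p2 < hb p1"
proof -
  have "hb p2 \<le> hb p1 + ln ((1 - p1) / p1) * (p2 - p1)"
    using assms by (intro hb_le_tangent) auto
  moreover have "ln ((1 - p1) / p1) * (p2 - p1) < 0"
    using assms by (intro mult_pos_neg) auto
  ultimately show ?thesis by simp
qed

lemma ln_odds_bounds:
  fixes a b :: real
  assumes "a + b = 1" "1/5 \<le> b" "b \<le> a"
  shows "0 \<le> ln (a / b)" "ln (a / b) \<le> 7 * (a - 1/2)"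
proof -
  have "b > 0" "a > 0" using assms by simp_all
  then have "ln (a / b) = ln (a / (1/2)) + ln ((1/2) / b)" by (simp add: ln_div ln_mult)
  also have "\<dots> \<le> (a / (1/2) - 1) + ((1/2) / b - 1)"
    using \<open>a > 0\<close> \<open>b > 0\<close> by (intro add_mono ln_le_minus_one) auto
  also have "(1/2) / b - 1 = (a - 1/2) / b" using assms \<open>b > 0\<close> by (simp add: field_simps)
  also have "(a - 1/2) / b \<le> (a - 1/2) / (1/5)"
    using assms \<open>b > 0\<close> by (intro divide_left_mono) auto
  finally show "ln (a / b) \<le> 7 * (a - 1/2)" by simp
  show "0 \<le> ln (a / b)" using assms \<open>b > 0\<close> by simp
qed

lemma abs_ln_odds_le:
  fixes q :: real
  assumes "1/5 \<le> q" "q \<le> 4/5"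
  shows "\<bar>ln ((1 - q) / q)\<bar> \<le> 7 * \<bar>1/2 - q\<bar>"
proof (cases "q \<le> 1/2")
  case True
  then show ?thesis using ln_odds_bounds[of "1 - q" q] assms by auto
next
  case False
  have "ln ((1 - q) / q) = - ln (q / (1 - q))" using assms False by (simp add: ln_div)
  then show ?thesis using ln_odds_bounds[of q "1 - q"] assms False by auto
qed

lemma sqrt2_bounds: "1 \<le> sqrt (2::real)" "7 * sqrt (2::real) \<le> 10"
proof -
  show "1 \<le> sqrt (2::real)" by simp
  have "sqrt (2::real) \<le> 10/7" by (rule real_le_lsqrt) (simp_all add: power2_eq_square)
  then show "7 * sqrt (2::real) \<le> 10" by simp
qed

lemma hb_le_plugin_index:
  fixes p q e :: real
  assumes "2/5 \<le> p" "p \<le> 1/2" "0 \<le> q" "q \<le> 1" "\<bar>q - p\<bar> < e"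
  shows "hb p \<le> hb q + 7 * \<bar>1/2 - q\<bar> * sqrt 2 * e + 18 * e\<^sup>2"
proof (cases "\<bar>1/2 - q\<bar> \<le> 3/10")
  case True
  then have q: "1/5 \<le> q" "q \<le> 4/5" unfolding abs_if by (auto split: if_splits)
  have "\<bar>p - q\<bar> \<le> 1 * e" using assms by simp
  also have "\<dots> \<le> sqrt 2 * e" using assms by (intro mult_right_mono sqrt2_bounds(1)) simp
  finally have "\<bar>p - q\<bar> \<le> sqrt 2 * e" .
  have "hb p \<le> hb q + ln ((1 - q) / q) * (p - q)" using q assms by (intro hb_le_tangent) auto
  also have "ln ((1 - q) / q) * (p - q) \<le> \<bar>ln ((1 - q) / q)\<bar> * \<bar>p - q\<bar>"
    by (metis abs_ge_self abs_mult)
  also have "\<dots> \<le> (7 * \<bar>1/2 - q\<bar>) * (sqrt 2 * e)"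
    using abs_ln_odds_le[OF q] \<open>\<bar>p - q\<bar> \<le> sqrt 2 * e\<close> by (intro mult_mono) auto
  finally have "hb p \<le> hb q + 7 * \<bar>1/2 - q\<bar> * sqrt 2 * e" by (simp add: mult_ac)
  moreover have "0 \<le> 18 * e\<^sup>2" by simp
  ultimately show ?thesis by linarith
next
  case False
  txt \<open>Then q is at least 1/5 away from p, and the two excess terms alone exceed
    ln 2 \<ge> hb p.\<close>
  have e: "1/5 \<le> e" using False assms unfolding abs_if by (auto split: if_splits)
  have "7 * (3/10) * 1 * (1/5) \<le> 7 * \<bar>1/2 - q\<bar> * sqrt 2 * e"
    using e False sqrt2_bounds(1) by (intro mult_mono) auto
  then have "21/50 \<le> 7 * \<bar>1/2 - q\<bar> * sqrt 2 * e" by simp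
  moreover have "18 * (1/5)\<^sup>2 \<le> 18 * e\<^sup>2" using e by (intro mult_left_mono power_mono) auto
  then have "18/25 \<le> 18 * e\<^sup>2" by (simp add: power2_eq_square)
  moreover have "hb p \<le> ln 2" "0 \<le> hb q" using assms by (intro hb_le_ln2 hb_nonneg; simp)+
  moreover have "ln (2::real) \<le> 1" using ln_le_minus_one[of 2] by simp
  ultimately show ?thesis by linarith
qed

lemma plugin_index_le:
  fixes p q e :: real
  assumes "2/5 \<le> p" "p \<le> 1/2" "0 \<le> q" "q \<le> 1" "\<bar>q - p\<bar> \<le> e"
  shows "hb q + 7 * \<bar>1/2 - q\<bar> * sqrt 2 * e + 18 * e\<^sup>2 \<le> hb p + 17 * (1/2 - p) * e + 28 * e\<^sup>2"
proof -
  have "hb q \<le> hb p + ln ((1 - p) / p) * (q - p)" using assms by (intro hb_le_tangent) auto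
  also have "ln ((1 - p) / p) * (q - p) \<le> \<bar>ln ((1 - p) / p)\<bar> * \<bar>q - p\<bar>"
    by (metis abs_ge_self abs_mult)
  also have "\<dots> \<le> (7 * (1/2 - p)) * e"
    using abs_ln_odds_le[of p] assms by (intro mult_mono) auto
  finally have "hb q \<le> hb p + 7 * (1/2 - p) * e" by simp
  moreover have "\<bar>1/2 - q\<bar> * (7 * sqrt 2) * e \<le> ((1/2 - p) + e) * 10 * e"
    using assms sqrt2_bounds(2) by (intro mult_mono) auto
  ultimately show ?thesis by (simp add: algebra_simps power2_eq_square)
qed

section \<open>The UCB index under small deviations\<close>

definition conf_radius :: "real \<Rightarrow> nat \<Rightarrow> nat \<Rightarrow> real" where
  "conf_radius \<alpha> m s = sqrt (\<alpha> * ln (real s) / (2 * real m))"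

lemma conf_radius_nonneg: "0 \<le> \<alpha> \<Longrightarrow> 1 \<le> s \<Longrightarrow> 0 \<le> conf_radius \<alpha> m s"
  by (simp add: conf_radius_def)

lemma conf_radius_squared:
  "0 \<le> \<alpha> \<Longrightarrow> 1 \<le> s \<Longrightarrow> (conf_radius \<alpha> m s)\<^sup>2 = \<alpha> * ln (real s) / (2 * real m)"
  by (simp add: conf_radius_def)

lemma UCD_ber_delta_alpha:
  assumes "1 \<le> s" "0 \<le> \<alpha>"
  shows "UCD_ber q (delta_alpha \<alpha> s) m
           = 7 * \<bar>1/2 - q\<bar> * sqrt 2 * conf_radius \<alpha> m s + 18 * (conf_radius \<alpha> m s)\<^sup>2"
proof -
  have "4 / delta_alpha \<alpha> s = real s powr \<alpha>"
    unfolding delta_alpha_def using assms by (simp add: powr_minus divide_simps)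
  then have "ln (4 / delta_alpha \<alpha> s) = \<alpha> * ln (real s)"
    using assms by (simp add: ln_powr)
  moreover have "sqrt 2 * conf_radius \<alpha> m s = sqrt (\<alpha> * ln (real s) / real m)"
    unfolding conf_radius_def by (simp flip: real_sqrt_mult)
  ultimately show ?thesis
    using assms unfolding UCD_ber_def by (simp add: conf_radius_squared field_simps)
qed

lemma exp_conf_radius:
  assumes "1 \<le> m" "1 \<le> s" "0 \<le> \<alpha>"
  shows "exp (- 2 * real m * (conf_radius \<alpha> m s)\<^sup>2) = real s powr (- \<alpha>)"
  using assms by (simp add: conf_radius_squared powr_def)

lemma hb_le_ucb_index:
  assumes "2/5 \<le> p" "p \<le> 1/2" "ys \<noteq> []" "1 \<le> s" "0 \<le> \<alpha>"
    and "\<bar>phat ys - p\<bar> < conf_radius \<alpha> (length ys) s"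
  shows "ereal (hb p) \<le> ucb_index ys (delta_alpha \<alpha> s)"
proof -
  have "0 \<le> phat ys" "phat ys \<le> 1"
    unfolding phat_def using length_filter_le[of id ys] by (auto simp: divide_le_eq_1)
  then have "hb p \<le> hb (phat ys) + 7 * \<bar>1/2 - phat ys\<bar> * sqrt 2 * conf_radius \<alpha> (length ys) s
                          + 18 * (conf_radius \<alpha> (length ys) s)\<^sup>2"
    using assms by (intro hb_le_plugin_index) auto
  then show ?thesis using assms unfolding ucb_index_def by (simp add: UCD_ber_delta_alpha)
qed

text \<open>The constants 578 = 2 * 17^2 and 30 are what is needed for 34 x e \<le> D and
  60 e^2 \<le> D once e^2 \<le> L / (2 n).\<close>

lemma excess_terms_less_gap:
  fixes x e L D n :: real
  assumes "0 \<le> x" "0 \<le> e" "0 < D" "0 < L" "0 < n" "e\<^sup>2 * (2 * n) \<le> L"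
    and "578 * x\<^sup>2 * L / D\<^sup>2 + 30 * L / D \<le> n"
  shows "17 * x * e + 28 * e\<^sup>2 < D"
proof -
  have "0 \<le> 578 * x\<^sup>2 * L / D\<^sup>2" "0 \<le> 30 * L / D" using assms by simp_all
  then have "578 * x\<^sup>2 * L / D\<^sup>2 \<le> n" "30 * L / D \<le> n" using assms(7) by linarith+
  then have A: "578 * x\<^sup>2 * L \<le> n * D\<^sup>2" and B: "30 * L \<le> n * D"
    using assms by (simp_all add: pos_divide_le_eq)
  have "578 * x\<^sup>2 * (e\<^sup>2 * (2 * n)) \<le> 578 * x\<^sup>2 * L" using assms by (intro mult_left_mono) auto
  then have "(34 * x * e)\<^sup>2 * n \<le> D\<^sup>2 * n" using A by (simp add: algebra_simps power2_eq_square)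
  then have "(34 * x * e)\<^sup>2 \<le> D\<^sup>2" using assms by simp
  then have "34 * x * e \<le> D" by (rule power2_le_imp_le) (use assms in simp)
  moreover have "30 * (e\<^sup>2 * (2 * n)) \<le> 30 * L" using assms(6) by linarith
  then have "(60 * e\<^sup>2) * n \<le> D * n" using B by (simp add: algebra_simps)
  then have "60 * e\<^sup>2 \<le> D" using assms by simp
  ultimately show ?thesis using assms by linarith
qed

lemma ucb_index_less:
  assumes "2/5 \<le> p" "p \<le> 1/2" "0 < D" "ys \<noteq> []" "2 \<le> s" "s \<le> t" "0 < \<alpha>"
    and "\<bar>phat ys - p\<bar> < conf_radius \<alpha> (length ys) s"
    and "578 * (1/2 - p)\<^sup>2 * (\<alpha> * ln (real t)) / D\<^sup>2 + 30 * (\<alpha> * ln (real t)) / D \<le> length ys"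
  shows "ucb_index ys (delta_alpha \<alpha> s) < ereal (hb p + D)"
proof -
  define e where "e = conf_radius \<alpha> (length ys) s"
  have "0 \<le> phat ys" "phat ys \<le> 1"
    unfolding phat_def using length_filter_le[of id ys] by (auto simp: divide_le_eq_1)
  then have "hb (phat ys) + 7 * \<bar>1/2 - phat ys\<bar> * sqrt 2 * e + 18 * e\<^sup>2
               \<le> hb p + 17 * (1/2 - p) * e + 28 * e\<^sup>2"
    using assms unfolding e_def by (intro plugin_index_le) auto
  moreover have "e\<^sup>2 * (2 * length ys) \<le> \<alpha> * ln (real t)"
    using assms by (simp add: e_def conf_radius_squared mult_left_mono)
  then have "17 * (1/2 - p) * e + 28 * e\<^sup>2 < D"
    using assms by (intro excess_terms_less_gap[where n = "length ys"])
      (auto simp: e_def conf_radius_nonneg)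
  ultimately show ?thesis
    using assms unfolding ucb_index_def by (simp add: UCD_ber_delta_alpha e_def)
qed

section \<open>Counting plays of the suboptimal arm\<close>

lemma ucb_counts_sum: "fst (ucb_counts \<alpha> tb X1 X2 t) + snd (ucb_counts \<alpha> tb X1 X2 t) = t"
  by (induction t) (auto simp: Let_def split: prod.split)

lemma ucb_counts_Suc_cases:
  assumes "ucb_counts \<alpha> tb X1 X2 t = (n1, n2)"
  obtains "snd (ucb_counts \<alpha> tb X1 X2 (Suc t)) = n2"
  | "snd (ucb_counts \<alpha> tb X1 X2 (Suc t)) = Suc n2" "n2 = 0"
  | "snd (ucb_counts \<alpha> tb X1 X2 (Suc t)) = Suc n2" "1 \<le> n1"
    "ucb_index (map X1 [0..<n1]) (delta_alpha \<alpha> (Suc t))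
       \<le> ucb_index (map X2 [0..<n2]) (delta_alpha \<alpha> (Suc t))"
proof -
  define i1 where "i1 = ucb_index (map X1 [0..<n1]) (delta_alpha \<alpha> (Suc t))"
  define i2 where "i2 = ucb_index (map X2 [0..<n2]) (delta_alpha \<alpha> (Suc t))"
  define play1 where
    "play1 \<longleftrightarrow> i1 > i2 \<or> (i1 = i2 \<and> tb (Suc t) (map X1 [0..<n1]) (map X2 [0..<n2]))"
  have step: "ucb_counts \<alpha> tb X1 X2 (Suc t) = (if play1 then (n1 + 1, n2) else (n1, n2 + 1))"
    using assms by (simp add: Let_def play1_def i1_def i2_def)
  consider "play1" | "\<not> play1" "n2 = 0" | "\<not> play1" "1 \<le> n2" by linarith
  then show thesis
  proof cases
    case 3
    have "i2 \<noteq> PInfty" using \<open>1 \<le> n2\<close> by (simp add: i2_def ucb_index_def)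
    moreover have "i1 \<le> i2" using \<open>\<not> play1\<close> by (auto simp: play1_def)
    ultimately have "1 \<le> n1" by (cases "n1 = 0") (auto simp: i1_def ucb_index_def)
    with 3 step that(3) show thesis by (simp add: \<open>i1 \<le> i2\<close>[unfolded i1_def i2_def])
  qed (use step that in auto)
qed

lemma one_le_sum_of_bool:
  fixes B1 B2 :: "'a \<Rightarrow> bool"
  assumes "finite A" "m1 \<in> A" "m2 \<in> A" "B1 m1 \<or> B2 m2"
  shows "1 \<le> (\<Sum>m\<in>A. of_bool (B1 m) + of_bool (B2 m) :: real)"
proof -
  have "of_bool (B1 m) + of_bool (B2 m) \<le> (\<Sum>m\<in>A. of_bool (B1 m) + of_bool (B2 m) :: real)"
    if "m \<in> A" for m
    using assms(1) that by (intro member_le_sum) auto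
  from this[OF assms(2)] this[OF assms(3)] assms(4) show ?thesis
    by (auto simp: of_bool_def split: if_splits)
qed

text \<open>Each play of arm 2 beyond its u-th is charged to its round s, where index1 and
  index2 force B1 or B2 at the current sample sizes.\<close>

lemma snd_ucb_counts_le:
  fixes B1 B2 :: "nat \<Rightarrow> nat \<Rightarrow> bool" and H :: real
  assumes index1: "\<And>s m. 2 \<le> s \<Longrightarrow> s \<le> T \<Longrightarrow> 1 \<le> m \<Longrightarrow> \<not> B1 m s \<Longrightarrow>
               ereal H \<le> ucb_index (map X1 [0..<m]) (delta_alpha \<alpha> s)"
    and index2: "\<And>s n. 2 \<le> s \<Longrightarrow> s \<le> T \<Longrightarrow> u \<le> n \<Longrightarrow> \<not> B2 n s \<Longrightarrow>
               ucb_index (map X2 [0..<n]) (delta_alpha \<alpha> s) < ereal H"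
    and "1 \<le> u" "t \<le> T"
  shows "real (snd (ucb_counts \<alpha> tb X1 X2 t))
           \<le> real u + (\<Sum>s\<in>{1..t}. \<Sum>m\<in>{1..<s}. of_bool (B1 m s) + of_bool (B2 m s))"
  using \<open>t \<le> T\<close>
proof (induction t)
  case (Suc t)
  define bad where "bad s = (\<Sum>m\<in>{1..<s}. of_bool (B1 m s) + of_bool (B2 m s) :: real)" for s
  have bad_nonneg: "0 \<le> bad s" for s unfolding bad_def by (intro sum_nonneg) auto
  then have "0 \<le> (\<Sum>s\<in>{1..t}. bad s)" by (intro sum_nonneg)
  have IH: "real (snd (ucb_counts \<alpha> tb X1 X2 t)) \<le> real u + (\<Sum>s\<in>{1..t}. bad s)"
    using Suc by (simp add: bad_def)
  obtain n1 n2 where n: "ucb_counts \<alpha> tb X1 X2 t = (n1, n2)" by fastforce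
  have "n1 + n2 = t" using ucb_counts_sum[of \<alpha> tb X1 X2 t] n by simp
  let ?i = "\<lambda>X n. ucb_index (map X [0..<n]) (delta_alpha \<alpha> (Suc t))"
  consider (stay) "snd (ucb_counts \<alpha> tb X1 X2 (Suc t)) = n2"
    | (early) "snd (ucb_counts \<alpha> tb X1 X2 (Suc t)) \<le> u"
    | (late) "snd (ucb_counts \<alpha> tb X1 X2 (Suc t)) = Suc n2" "u \<le> n2" "1 \<le> n1" "?i X1 n1 \<le> ?i X2 n2"
  proof (cases rule: ucb_counts_Suc_cases[OF n])
    case 3
    then show thesis by (cases "n2 < u") (auto intro: that(2,3))
  qed (use that \<open>1 \<le> u\<close> in auto)
  then have "real (snd (ucb_counts \<alpha> tb X1 X2 (Suc t))) \<le> real u + (\<Sum>s\<in>{1..t}. bad s) + bad (Suc t)"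
  proof cases
    case stay
    then show ?thesis using IH n bad_nonneg[of "Suc t"] by simp
  next
    case early
    then show ?thesis using \<open>0 \<le> (\<Sum>s\<in>{1..t}. bad s)\<close> bad_nonneg[of "Suc t"]
      by (simp del: ucb_counts.simps)
  next
    case late
    have "B1 n1 (Suc t) \<or> B2 n2 (Suc t)"
    proof (rule ccontr)
      assume "\<not> (B1 n1 (Suc t) \<or> B2 n2 (Suc t))"
      moreover have "2 \<le> Suc t" using late \<open>u \<le> n2\<close> \<open>1 \<le> u\<close> \<open>n1 + n2 = t\<close> by simp
      ultimately have "ereal H \<le> ?i X1 n1" "?i X2 n2 < ereal H"
        using late Suc.prems by (auto intro: index1 index2)
      then show False using late by simp
    qed
    then have "1 \<le> bad (Suc t)"
      unfolding bad_def using late \<open>1 \<le> u\<close> \<open>n1 + n2 = t\<close> by (intro one_le_sum_of_bool) auto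
    then show ?thesis using IH late n by simp
  qed
  then show ?case by (simp add: bad_def)
qed simp

section \<open>Deviation probabilities\<close>

definition deviates :: "real \<Rightarrow> real \<Rightarrow> (nat \<Rightarrow> bool) \<Rightarrow> nat \<Rightarrow> nat \<Rightarrow> bool" where
  "deviates \<alpha> p X m s \<longleftrightarrow> conf_radius \<alpha> m s \<le> \<bar>phat (map X [0..<m]) - p\<bar>"

lemma phat_map_upt: "phat (map X [0..<m]) = real (card {i\<in>{..<m}. X i}) / real m"
proof -
  have "length (filter id (map X [0..<m])) = card {i\<in>{..<m}. X i}"
    unfolding length_filter_conv_card by (intro arg_cong[where f = card]) auto
  then show ?thesis unfolding phat_def by simp
qed

lemma map_pmf_card_Pi_bernoulli:
  assumes "m \<le> t" "p \<in> {0..1}"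
  shows "map_pmf (\<lambda>X. card {i\<in>{..<m}. X i}) (Pi_pmf {..<t} False (\<lambda>_. bernoulli_pmf p))
           = binomial_pmf m p"
proof -
  have "binomial_pmf m p
          = map_pmf (\<lambda>X. card {i\<in>{..<m}. X i}) (Pi_pmf {..<m} False (\<lambda>_. bernoulli_pmf p))"
    using assms by (intro binomial_pmf_altdef') auto
  also have "Pi_pmf {..<m} False (\<lambda>_. bernoulli_pmf p) =
     map_pmf (\<lambda>X i. if i \<in> {..<m} then X i else False) (Pi_pmf {..<t} False (\<lambda>_. bernoulli_pmf p))"
    using assms by (intro Pi_pmf_subset) auto
  finally show ?thesis
    by (auto simp: pmf.map_comp o_def intro!: map_pmf_cong arg_cong[where f = card])
qed

lemma prob_phat_deviation_le:
  assumes "1 \<le> m" "m \<le> t" "p \<in> {0..1}" "0 \<le> e"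
  shows "measure_pmf.prob (Pi_pmf {..<t} False (\<lambda>_. bernoulli_pmf p))
           {X. e \<le> \<bar>phat (map X [0..<m]) - p\<bar>} \<le> 2 * exp (- 2 * real m * e\<^sup>2)"
proof -
  have "measure_pmf.prob (Pi_pmf {..<t} False (\<lambda>_. bernoulli_pmf p))
           {X. e \<le> \<bar>phat (map X [0..<m]) - p\<bar>}
        = measure_pmf.prob (map_pmf (\<lambda>X. card {i\<in>{..<m}. X i})
            (Pi_pmf {..<t} False (\<lambda>_. bernoulli_pmf p))) {k. e \<le> \<bar>real k / real m - p\<bar>}"
    by (simp add: measure_map_pmf phat_map_upt vimage_def)
  also have "map_pmf (\<lambda>X. card {i\<in>{..<m}. X i}) (Pi_pmf {..<t} False (\<lambda>_. bernoulli_pmf p))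
               = binomial_pmf m p"
    using assms by (intro map_pmf_card_Pi_bernoulli) auto
  also have "measure_pmf.prob (binomial_pmf m p) {k. e \<le> \<bar>real k / real m - p\<bar>}
               \<le> 2 * exp (real_of_int (- 2 * int m) * e\<^sup>2)"
    using assms by (intro binomial_distribution.prob_abs_ge') (auto simp: binomial_distribution_def)
  finally show ?thesis by simp
qed

lemma expectation_deviates_le:
  assumes "1 \<le> m" "m \<le> t" "1 \<le> s" "0 \<le> \<alpha>" "p \<in> {0..1}"
  shows "measure_pmf.expectation (Pi_pmf {..<t} False (\<lambda>_. bernoulli_pmf p))
           (\<lambda>X. of_bool (deviates \<alpha> p X m s)) \<le> 2 * real s powr (- \<alpha>)"
proof -
  have "(\<lambda>X. of_bool (deviates \<alpha> p X m s) :: real)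
          = indicator {X. conf_radius \<alpha> m s \<le> \<bar>phat (map X [0..<m]) - p\<bar>}"
    by (auto simp: fun_eq_iff deviates_def)
  then have "measure_pmf.expectation (Pi_pmf {..<t} False (\<lambda>_. bernoulli_pmf p))
                (\<lambda>X. of_bool (deviates \<alpha> p X m s))
              = measure_pmf.prob (Pi_pmf {..<t} False (\<lambda>_. bernoulli_pmf p))
                {X. conf_radius \<alpha> m s \<le> \<bar>phat (map X [0..<m]) - p\<bar>}"
    by (simp add: measure_pmf.emeasure_eq_measure)
  also have "\<dots> \<le> 2 * exp (- 2 * real m * (conf_radius \<alpha> m s)\<^sup>2)"
    using assms by (intro prob_phat_deviation_le conf_radius_nonneg) auto
  also have "\<dots> = 2 * real s powr (- \<alpha>)" using exp_conf_radius[of m s \<alpha>] assms by simp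
  finally show ?thesis .
qed

lemma one_add_mult_le_powr_neg:
  fixes h \<beta> :: real
  assumes "0 \<le> h" "h < 1" "0 < \<beta>"
  shows "1 + \<beta> * h \<le> (1 - h) powr (- \<beta>)"
proof -
  have "\<beta> * h \<le> \<beta> * (- ln (1 - h))"
    using assms ln_le_minus_one[of "1 - h"] by (intro mult_left_mono) auto
  also have "1 + \<beta> * (- ln (1 - h)) \<le> exp (- \<beta> * ln (1 - h))"
    using exp_ge_add_one_self[of "- \<beta> * ln (1 - h)"] by simp
  also have "\<dots> = (1 - h) powr (- \<beta>)" using assms by (simp add: powr_def)
  finally show ?thesis by simp
qed

lemma powr_telescoping_step:
  fixes s \<alpha> :: real
  assumes "2 \<le> s" "2 < \<alpha>"
  shows "(\<alpha> - 2) * (s - 1) * s powr (- \<alpha>) + s powr (2 - \<alpha>) \<le> (s - 1) powr (2 - \<alpha>)"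
proof -
  have "0 < s" using assms by simp
  have "s powr (2 - \<alpha>) = s powr 2 * s powr (- \<alpha>)"
    using powr_add[of s 2 "- \<alpha>"] by simp
  then have s_powr: "s powr (2 - \<alpha>) = s * (s * s powr (- \<alpha>))"
    using \<open>0 < s\<close> by (simp add: powr_numeral power2_eq_square)
  have "(\<alpha> - 2) * (s - 1) * s powr (- \<alpha>) \<le> (\<alpha> - 2) * s * s powr (- \<alpha>)"
    using assms by (intro mult_right_mono mult_left_mono) auto
  also have "(\<alpha> - 2) * s * s powr (- \<alpha>) = s powr (2 - \<alpha>) * ((\<alpha> - 2) * (1 / s))"
    using \<open>0 < s\<close> unfolding s_powr by simp
  finally have "(\<alpha> - 2) * (s - 1) * s powr (- \<alpha>) + s powr (2 - \<alpha>)
                  \<le> s powr (2 - \<alpha>) * (1 + (\<alpha> - 2) * (1 / s))"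
    by (simp add: distrib_left)
  also have "\<dots> \<le> s powr (2 - \<alpha>) * (1 - 1 / s) powr (- (\<alpha> - 2))"
    using assms by (intro mult_left_mono one_add_mult_le_powr_neg) auto
  also have "\<dots> = (s * (1 - 1 / s)) powr (2 - \<alpha>)"
    using assms by (subst powr_mult) auto
  also have "s * (1 - 1 / s) = s - 1" using \<open>0 < s\<close> by (simp add: right_diff_distrib)
  finally show ?thesis .
qed

lemma sum_pred_mult_powr_le:
  fixes \<alpha> :: real
  assumes "2 < \<alpha>"
  shows "(\<Sum>s\<in>{1..t}. real (s - 1) * real s powr (- \<alpha>)) \<le> 1 / (\<alpha> - 2)"
proof -
  have "(\<Sum>s\<in>{1..t}. real (s - 1) * real s powr (- \<alpha>)) \<le> (1 - real t powr (2 - \<alpha>)) / (\<alpha> - 2)"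
  proof (induction t)
    case (Suc t)
    show ?case
    proof (cases "t = 0")
      case False
      have "(\<alpha> - 2) * real t * real (Suc t) powr (- \<alpha>) + real (Suc t) powr (2 - \<alpha>)
              \<le> real t powr (2 - \<alpha>)"
        using powr_telescoping_step[of "real (Suc t)" \<alpha>] False assms by simp
      then have "real t * real (Suc t) powr (- \<alpha>)
                   \<le> (real t powr (2 - \<alpha>) - real (Suc t) powr (2 - \<alpha>)) / (\<alpha> - 2)"
        using assms by (simp add: le_divide_eq algebra_simps)
      then show ?thesis using Suc.IH by (simp add: diff_divide_distrib)
    qed simp
  qed (use assms in simp)
  also have "\<dots> \<le> 1 / (\<alpha> - 2)" using assms by (intro divide_right_mono) auto
  finally show ?thesis .
qed
lemma integrable_sample_pmf:
  fixes f :: "(nat \<Rightarrow> bool) \<times> (nat \<Rightarrow> bool) \<Rightarrow> real"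
  shows "integrable (measure_pmf (sample_pmf p1 p2 t)) f"
proof (rule integrable_measure_pmf_finite)
  show "finite (set_pmf (sample_pmf p1 p2 t))"
    unfolding sample_pmf_def by (auto simp: set_Pi_pmf intro!: finite_PiE_dflt)
qed

lemma expectation_deviation_count_le:
  assumes "p1 \<in> {0..1}" "p2 \<in> {0..1}" "2 < \<alpha>"
  shows "measure_pmf.expectation (sample_pmf p1 p2 t) (\<lambda>z.
           \<Sum>s\<in>{1..t}. \<Sum>m\<in>{1..<s}.
             of_bool (deviates \<alpha> p1 (fst z) m s) + of_bool (deviates \<alpha> p2 (snd z) m s))
         \<le> 4 / (\<alpha> - 2)"
proof -
  let ?M = "sample_pmf p1 p2 t" and ?B = "\<lambda>p. Pi_pmf {..<t} False (\<lambda>_. bernoulli_pmf p)"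
  have "?B p1 = map_pmf fst ?M" "?B p2 = map_pmf snd ?M"
    by (simp_all add: sample_pmf_def map_fst_pair_pmf map_snd_pair_pmf)
  then have term_le: "measure_pmf.expectation ?M (\<lambda>z. of_bool (deviates \<alpha> p1 (fst z) m s))
      + measure_pmf.expectation ?M (\<lambda>z. of_bool (deviates \<alpha> p2 (snd z) m s))
      \<le> 4 * real s powr (- \<alpha>)" if "s \<in> {1..t}" "m \<in> {1..<s}" for s m
    using that assms expectation_deviates_le[of m t s \<alpha> p1] expectation_deviates_le[of m t s \<alpha> p2]
    by (simp add: integral_map_pmf[symmetric])
  have "measure_pmf.expectation ?M (\<lambda>z.
           \<Sum>s\<in>{1..t}. \<Sum>m\<in>{1..<s}.
             of_bool (deviates \<alpha> p1 (fst z) m s) + of_bool (deviates \<alpha> p2 (snd z) m s) :: real)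
        = (\<Sum>s\<in>{1..t}. \<Sum>m\<in>{1..<s}.
             measure_pmf.expectation ?M (\<lambda>z. of_bool (deviates \<alpha> p1 (fst z) m s))
           + measure_pmf.expectation ?M (\<lambda>z. of_bool (deviates \<alpha> p2 (snd z) m s)))"
    by (simp add: Bochner_Integration.integral_sum[OF integrable_sample_pmf]
        Bochner_Integration.integral_add[OF integrable_sample_pmf integrable_sample_pmf])
  also have "\<dots> \<le> (\<Sum>s\<in>{1..t}. \<Sum>m\<in>{1..<s}. 4 * real s powr (- \<alpha>))"
    using term_le by (intro sum_mono) auto
  also have "\<dots> = 4 * (\<Sum>s\<in>{1..t}. real (s - 1) * real s powr (- \<alpha>))"
    by (simp add: sum_distrib_left mult_ac)
  also have "\<dots> \<le> 4 * (1 / (\<alpha> - 2))"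
    using assms by (intro mult_left_mono sum_pred_mult_powr_le) auto
  finally show ?thesis by simp
qed

section \<open>The regret bound\<close>

lemma snd_ucb_counts_le_deviations:
  assumes "2/5 \<le> p2" "p2 < p1" "p1 < 1/2" "0 < \<alpha>" "1 \<le> u"
    and "578 * (1/2 - p2)\<^sup>2 * (\<alpha> * ln (real t)) / (hb p1 - hb p2)\<^sup>2
           + 30 * (\<alpha> * ln (real t)) / (hb p1 - hb p2) \<le> real u"
  shows "real (snd (ucb_counts \<alpha> tb X1 X2 t)) \<le> real u +
           (\<Sum>s\<in>{1..t}. \<Sum>m\<in>{1..<s}. of_bool (deviates \<alpha> p1 X1 m s) + of_bool (deviates \<alpha> p2 X2 m s))"
proof (rule snd_ucb_counts_le[where T = t and H = "hb p1"])
  fix s m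
  assume "2 \<le> s" "1 \<le> m" "\<not> deviates \<alpha> p1 X1 m s"
  then show "ereal (hb p1) \<le> ucb_index (map X1 [0..<m]) (delta_alpha \<alpha> s)"
    using assms by (intro hb_le_ucb_index) (auto simp: deviates_def)
next
  fix s n
  assume "2 \<le> s" "s \<le> t" "u \<le> n" "\<not> deviates \<alpha> p2 X2 n s"
  moreover have "0 < hb p1 - hb p2" using hb_less assms by simp
  ultimately have "ucb_index (map X2 [0..<n]) (delta_alpha \<alpha> s) < ereal (hb p2 + (hb p1 - hb p2))"
    using assms by (intro ucb_index_less) (auto simp: deviates_def)
  then show "ucb_index (map X2 [0..<n]) (delta_alpha \<alpha> s) < ereal (hb p1)" by simp
qed (use assms in auto)

lemma expected_plays_2_le:
  assumes "2/5 \<le> p2" "p2 < p1" "p1 < 1/2" "2 < \<alpha>" "1 \<le> u"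
    and "578 * (1/2 - p2)\<^sup>2 * (\<alpha> * ln (real t)) / (hb p1 - hb p2)\<^sup>2
           + 30 * (\<alpha> * ln (real t)) / (hb p1 - hb p2) \<le> real u"
  shows "expected_plays p1 p2 \<alpha> tb 2 t \<le> real u + 4 / (\<alpha> - 2)"
proof -
  let ?M = "measure_pmf (sample_pmf p1 p2 t)"
  let ?dev = "\<lambda>z. \<Sum>s\<in>{1..t}. \<Sum>m\<in>{1..<s}.
                of_bool (deviates \<alpha> p1 (fst z) m s) + of_bool (deviates \<alpha> p2 (snd z) m s) :: real"
  have "expected_plays p1 p2 \<alpha> tb 2 t \<le> integral\<^sup>L ?M (\<lambda>z. real u + ?dev z)"
    unfolding expected_plays_def
    using snd_ucb_counts_le_deviations[OF assms(1-3) _ assms(5,6)] assms(4)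
    by (intro integral_mono integrable_sample_pmf) (auto split: prod.split)
  also have "\<dots> = real u + integral\<^sup>L ?M ?dev"
    by (simp add: integrable_sample_pmf)
  also have "integral\<^sup>L ?M ?dev \<le> 4 / (\<alpha> - 2)"
    using assms by (intro expectation_deviation_count_le) auto
  finally show ?thesis by simp
qed

lemma pseudo_regret_eq:
  assumes "hb p2 < hb p1"
  shows "pseudo_regret p1 p2 \<alpha> tb t = expected_plays p1 p2 \<alpha> tb 2 t * (hb p1 - hb p2)"
proof -
  have "{i \<in> {1::nat, 2}. max (hb p1) (hb p2) - (if i = 1 then hb p1 else hb p2) > 0} = {2}"
    using assms by auto
  then show ?thesis using assms by (simp add: pseudo_regret_def Let_def max_def)
qed

lemma regret_constants_le:
  fixes x \<alpha> l D :: real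
  assumes "0 < D" "0 \<le> l" "2 < \<alpha>"
  shows "(578 * x\<^sup>2 * (\<alpha> * l) / D\<^sup>2 + 30 * (\<alpha> * l) / D + 1 + 4 / (\<alpha> - 2)) * D
           \<le> 784 * x\<^sup>2 * \<alpha> * l / D + 60 * \<alpha> * l + 8 * (\<alpha> - 1) / (\<alpha> - 2) * D"
proof -
  have "(578 * x\<^sup>2 * (\<alpha> * l) / D\<^sup>2 + 30 * (\<alpha> * l) / D + 1 + 4 / (\<alpha> - 2)) * D
          = 578 * x\<^sup>2 * \<alpha> * l / D + 30 * \<alpha> * l + (\<alpha> + 2) / (\<alpha> - 2) * D"
    using assms by (simp add: field_simps power2_eq_square)
  also have "\<dots> \<le> 784 * x\<^sup>2 * \<alpha> * l / D + 60 * \<alpha> * l + 8 * (\<alpha> - 1) / (\<alpha> - 2) * D"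
    using assms by (intro add_mono divide_right_mono mult_right_mono) auto
  finally show ?thesis .
qed

theorem theorem4:
  fixes p1 p2 \<alpha> :: real and t :: nat
    and tb :: "nat \<Rightarrow> bool list \<Rightarrow> bool list \<Rightarrow> bool"
  assumes "2/5 \<le> p2" and "p2 < p1" and "p1 < 1/2"
    and "\<alpha> > 2" and "t \<ge> 2"
  shows "pseudo_regret p1 p2 \<alpha> tb t
           \<le> 784 * (1/2 - p2)^2 * \<alpha> * ln (real t) / (hb p1 - hb p2)
             + 60 * \<alpha> * ln (real t)
             + 8 * (\<alpha> - 1) / (\<alpha> - 2) * (hb p1 - hb p2)"
proof -
  define D where "D = hb p1 - hb p2"
  define U where "U = 578 * (1/2 - p2)\<^sup>2 * (\<alpha> * ln (real t)) / D\<^sup>2 + 30 * (\<alpha> * ln (real t)) / D"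
  have "0 < D" using hb_less assms by (simp add: D_def)
  moreover have "0 < ln (real t)" using assms by simp
  ultimately have "0 < U" using assms unfolding U_def by (intro add_nonneg_pos) auto
  moreover have "1 \<le> nat \<lceil>U\<rceil>" using \<open>0 < U\<close> by linarith
  ultimately have "expected_plays p1 p2 \<alpha> tb 2 t \<le> real (nat \<lceil>U\<rceil>) + 4 / (\<alpha> - 2)"
    using assms by (intro expected_plays_2_le) (auto simp: U_def D_def)
  moreover have "real (nat \<lceil>U\<rceil>) \<le> U + 1" using \<open>0 < U\<close> by linarith
  ultimately have "expected_plays p1 p2 \<alpha> tb 2 t \<le> U + 1 + 4 / (\<alpha> - 2)" by simp
  then have "pseudo_regret p1 p2 \<alpha> tb t \<le> (U + 1 + 4 / (\<alpha> - 2)) * D"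
    using \<open>0 < D\<close> by (simp add: pseudo_regret_eq D_def mult_right_mono)
  also have "\<dots> \<le> 784 * (1/2 - p2)\<^sup>2 * \<alpha> * ln (real t) / D + 60 * \<alpha> * ln (real t)
                   + 8 * (\<alpha> - 1) / (\<alpha> - 2) * D"
    unfolding U_def using \<open>0 < D\<close> \<open>0 < ln (real t)\<close> assms
    by (intro regret_constants_le) auto
  finally show ?thesis by (simp add: D_def)
qed

end
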